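(* For integers $n \ge k \ge 1$, let $\Gamma(n,k)$ denote the maximum number of edges of a (simple, undirected) graph $G$ on $n$ vertices, taken over all such graphs $G$ together with $k$ vertex-disjoint directed paths $P_1,\ldots,P_k$ in $G$ covering $V(G)$, subject to the constraint that the digraph $D(G,P_1,\ldots,P_k)$ is acyclic. Then $\Gamma(n,k) = kn - \binom{k+1}{2}$ for all integers $n \ge k \ge 1$.
   Context: Graphs are finite, simple and undirected; $xy$ denotes an edge and $y \sim z$ means $y$ and $z$ are adjacent in $G$. A directed path in $G$ is a sequence $v_1 \to v_2 \to \cdots \to v_m$ ($m \ge 1$; a path with $m=1$ is trivial) of distinct vertices of $G$ with $v_t v_{t+1} \in E(G)$ for each $t$; its arcs are $v_t \to v_{t+1}$. The paths $P_1,\ldots,P_k$ are vertex-disjoint and cover $V(G)$, i.e. every vertex of $G$ lies in exactly one $P_j$. The digraph $D = D(G,P_1,\ldots,P_k)$ has vertex set $V(G)$, and for distinct vertices $x,y$ there is an arc $x \to y$ in $D$ if and only if either some path $P_j$ contains the arc $x \to y$, or there is a vertex $z$ and a path $P_j$ such that $x \to z$ is an arc of $P_j$ and $y \sim z$ in $G$. $D$ is acyclic if it contains no directed cycle. *)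

theory Defs
  imports Main
begin

definition simple_graph :: "'a set \<Rightarrow> 'a set set \<Rightarrow> bool" where
  "simple_graph V E \<longleftrightarrow> (\<forall>e\<in>E. e \<subseteq> V \<and> card e = 2)"

definition adj :: "'a set set \<Rightarrow> 'a \<Rightarrow> 'a \<Rightarrow> bool" where
  "adj E x y \<longleftrightarrow> {x, y} \<in> E"

definition dir_path :: "'a set set \<Rightarrow> 'a list \<Rightarrow> bool" where
  "dir_path E p \<longleftrightarrow> p \<noteq> [] \<and> distinct p \<and>
     (\<forall>t. Suc t < length p \<longrightarrow> adj E (p ! t) (p ! Suc t))"

definition path_arcs :: "'a list \<Rightarrow> ('a \<times> 'a) set" where
  "path_arcs p = {(p ! t, p ! Suc t) | t. Suc t < length p}"

definition path_cover :: "'a set \<Rightarrow> 'a set set \<Rightarrow> 'a list list \<Rightarrow> bool" where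
  "path_cover V E Ps \<longleftrightarrow> (\<forall>p\<in>set Ps. dir_path E p) \<and>
     distinct (concat Ps) \<and> set (concat Ps) = V"

definition D_arcs :: "'a set set \<Rightarrow> 'a list list \<Rightarrow> ('a \<times> 'a) set" where
  "D_arcs E Ps = {(x, y). x \<noteq> y \<and>
     ((\<exists>p\<in>set Ps. (x, y) \<in> path_arcs p) \<or>
      (\<exists>z. \<exists>p\<in>set Ps. (x, z) \<in> path_arcs p \<and> adj E y z))}"

definition Gamma :: "nat \<Rightarrow> nat \<Rightarrow> nat" where
  "Gamma n k = Max {card E | E Ps. simple_graph {0..<n} E \<and> length Ps = k \<and>
      path_cover {0..<n} E Ps \<and> acyclic (D_arcs E Ps)}"

end

theory Submission imports Defs begin

text \<open>Upper bound, by induction on n. As D is acyclic it has a source s. Then s starts its path,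
  and every neighbour v of s starts a path or follows s on its path, since a predecessor u \<noteq> s
  of v would give the arc u \<rightarrow> s. Deleting s leaves an admissible configuration on n - 1 vertices
  with k' paths and loses at most k' edges, where k' = k if s has a successor and k' = k - 1
  otherwise; in the second case the induction closes because k \<le> n.

  Lower bound: let 0, ..., k - 2 be trivial paths adjacent to every vertex, and let
  n - 1 \<rightarrow> ... \<rightarrow> k - 1 be the last path. Every arc of D decreases the vertex, and the graph has
  (k - 1 choose 2) + (k - 1) (n - k + 1) + (n - k) = k n - (k + 1 choose 2) edges.\<close>

lemma path_arcs_Cons_subset: "path_arcs p \<subseteq> path_arcs (s # p)"
  unfolding path_arcs_def by force

lemma dir_path_ConsD: "dir_path E (s # p) \<Longrightarrow> p \<noteq> [] \<Longrightarrow> dir_path E p"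
  unfolding dir_path_def by auto

lemma dir_path_avoiding:
  assumes "dir_path E p" "s \<notin> set p"
  shows "dir_path {e \<in> E. s \<notin> e} p"
  using assms unfolding dir_path_def adj_def
  by (metis (no_types, lifting) Suc_lessD insert_iff mem_Collect_eq nth_mem singletonD)

lemma simple_graph_finite_edges:
  assumes "simple_graph V E" "finite V"
  shows "finite E"
proof -
  have "E \<subseteq> Pow V" using assms(1) unfolding simple_graph_def by auto
  then show ?thesis using assms(2) by (simp add: finite_subset)
qed

lemma card_incident_edges_le:
  assumes "simple_graph V E" "finite N" "\<And>v. adj E s v \<Longrightarrow> v \<noteq> s \<Longrightarrow> v \<in> V \<Longrightarrow> v \<in> N"
  shows "card {e \<in> E. s \<in> e} \<le> card N"
proof -
  have "{e \<in> E. s \<in> e} \<subseteq> (\<lambda>v. {s, v}) ` N"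
  proof
    fix e assume e: "e \<in> {e \<in> E. s \<in> e}"
    then have "e \<subseteq> V" "card e = 2" using assms(1) unfolding simple_graph_def by auto
    then obtain a b where ab: "e = {a, b}" "a \<noteq> b" by (meson card_2_iff)
    define v where "v = (if a = s then b else a)"
    have ev: "e = {s, v}" "v \<noteq> s" using ab e by (auto simp: v_def)
    then have "v \<in> N" using assms(3) e \<open>e \<subseteq> V\<close> unfolding adj_def by blast
    then show "e \<in> (\<lambda>v. {s, v}) ` N" using ev by blast
  qed
  then have "card {e \<in> E. s \<in> e} \<le> card ((\<lambda>v. {s, v}) ` N)"
    using assms(2) by (intro card_mono) auto
  also have "\<dots> \<le> card N" using assms(2) by (rule card_image_le)
  finally show ?thesis .
qed

lemma path_cover_length_le_card:
  assumes "path_cover V E Ps"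
  shows "length Ps \<le> card V"
proof -
  have "length Ps = (\<Sum>p\<leftarrow>Ps. 1)" by (simp add: sum_list_triv)
  also have "\<dots> \<le> (\<Sum>p\<leftarrow>Ps. length p)"
    using assms unfolding path_cover_def dir_path_def
    by (intro sum_list_mono) (simp add: Suc_leI)
  also have "\<dots> = card V"
    using assms unfolding path_cover_def by (metis distinct_card length_concat)
  finally show ?thesis .
qed

lemma path_cover_path_unique:
  assumes "path_cover V E Ps" "p \<in> set Ps" "q \<in> set Ps" "v \<in> set p" "v \<in> set q"
  shows "p = q"
  using assms unfolding path_cover_def distinct_concat_iff by blast

lemma D_arcs_subset_Times:
  assumes "simple_graph V E" "path_cover V E Ps"
  shows "D_arcs E Ps \<subseteq> V \<times> V"
proof -
  have "x \<in> V" if "(x, z) \<in> path_arcs p" "p \<in> set Ps" for x z p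
    using assms(2) that unfolding path_cover_def path_arcs_def by auto
  moreover have "z \<in> V" if "(x, z) \<in> path_arcs p" "p \<in> set Ps" for x z p
    using assms(2) that unfolding path_cover_def path_arcs_def by auto
  moreover have "y \<in> V" if "adj E y z" for y z
    using assms(1) that unfolding simple_graph_def adj_def by auto
  ultimately show ?thesis unfolding D_arcs_def by blast
qed

lemma D_arcs_path_arcI:
  "(x, y) \<in> path_arcs p \<Longrightarrow> p \<in> set Ps \<Longrightarrow> x \<noteq> y \<Longrightarrow> (x, y) \<in> D_arcs E Ps"
  unfolding D_arcs_def by blast

lemma D_arcs_adjacentI:
  "(x, z) \<in> path_arcs p \<Longrightarrow> p \<in> set Ps \<Longrightarrow> adj E y z \<Longrightarrow> x \<noteq> y \<Longrightarrow> (x, y) \<in> D_arcs E Ps"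
  unfolding D_arcs_def by blast

lemma finite_acyclic_has_source:
  assumes "finite V" "V \<noteq> {}" "r \<subseteq> V \<times> V" "acyclic r"
  obtains s where "s \<in> V" "\<And>y. (y, s) \<notin> r"
proof -
  have "wf r"
    using assms by (intro finite_acyclic_wf) (auto intro: finite_subset)
  then obtain s where "s \<in> V" "\<And>y. (y, s) \<in> r \<Longrightarrow> y \<notin> V"
    using wfE_min assms(2) by (metis ex_in_conv)
  then show thesis using that assms(3) by blast
qed

lemma D_source_starts_path:
  assumes pc: "path_cover V E Ps" and "s \<in> V" and src: "\<And>y. (y, s) \<notin> D_arcs E Ps"
  obtains A p B where "Ps = A @ (s # p) # B"
proof -
  obtain q where q: "q \<in> set Ps" "s \<in> set q"
    using pc \<open>s \<in> V\<close> unfolding path_cover_def by auto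
  then have dq: "dir_path E q" using pc unfolding path_cover_def by auto
  obtain i where i: "i < length q" "q ! i = s" using q(2) by (meson in_set_conv_nth)
  have "i = 0"
  proof (rule ccontr)
    assume "i \<noteq> 0"
    then obtain j where j: "i = Suc j" by (cases i) auto
    have "(q ! j, s) \<in> path_arcs q" using i j unfolding path_arcs_def by auto
    moreover have "q ! j \<noteq> s"
      using dq i j unfolding dir_path_def by (metis Suc_lessD n_not_Suc_n nth_eq_iff_index_eq)
    ultimately have "(q ! j, s) \<in> D_arcs E Ps" using q(1) by (meson D_arcs_path_arcI)
    then show False using src by blast
  qed
  then have "q = s # tl q" using i by (metis hd_Cons_tl hd_conv_nth list.size(3) not_less0)
  then show thesis using that split_list[OF q(1)] by metis
qed

lemma neighbour_of_D_source:
  assumes pc: "path_cover V E (A @ (s # p) # B)"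
    and src: "\<And>y. (y, s) \<notin> D_arcs E (A @ (s # p) # B)"
    and v: "adj E s v" "v \<noteq> s" "v \<in> V"
  shows "v \<in> hd ` set (A @ [q\<leftarrow>[p]. q \<noteq> []] @ B)"
proof -
  let ?Ps = "A @ (s # p) # B"
  obtain q where q: "q \<in> set ?Ps" "v \<in> set q"
    using pc v(3) unfolding path_cover_def set_concat by blast
  obtain t where t: "t < length q" "q ! t = v" using q(2) by (meson in_set_conv_nth)
  show ?thesis
  proof (cases t)
    case 0
    then have "v = hd q" using t by (simp add: hd_conv_nth)
    then have "q \<in> set (A @ B)" using q(1) v(2) by auto
    then show ?thesis using \<open>v = hd q\<close> by auto
  next
    case (Suc j)
    have arc: "(q ! j, v) \<in> path_arcs q" using t Suc unfolding path_arcs_def by auto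
    have "q ! j = s"
    proof (rule ccontr)
      assume "q ! j \<noteq> s"
      then have "(q ! j, s) \<in> D_arcs E ?Ps" using arc q(1) v(1) by (meson D_arcs_adjacentI)
      then show False using src by blast
    qed
    have "j < length q" using t Suc by simp
    then have "s \<in> set q" using \<open>q ! j = s\<close> nth_mem by metis
    then have q_eq: "q = s # p" using path_cover_path_unique[OF pc q(1), of "s # p" s] by simp
    moreover have "distinct q" using pc q(1) unfolding path_cover_def dir_path_def by blast
    ultimately have "j = 0"
      using \<open>q ! j = s\<close> \<open>j < length q\<close> nth_eq_iff_index_eq[of q j 0] by simp
    then have "p \<noteq> []" "v = hd p" using t Suc q_eq by (auto simp: hd_conv_nth)
    then show ?thesis by (simp add: image_iff)
  qed
qed

lemma degree_of_D_source_le: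
  assumes "simple_graph V E" "path_cover V E (A @ (s # p) # B)"
    and "\<And>y. (y, s) \<notin> D_arcs E (A @ (s # p) # B)"
  shows "card {e \<in> E. s \<in> e} \<le> length (A @ [q\<leftarrow>[p]. q \<noteq> []] @ B)"
proof -
  have "card {e \<in> E. s \<in> e} \<le> card (hd ` set (A @ [q\<leftarrow>[p]. q \<noteq> []] @ B))"
    using neighbour_of_D_source[OF assms(2,3)] by (intro card_incident_edges_le[OF assms(1)]) auto
  also have "\<dots> \<le> length (A @ [q\<leftarrow>[p]. q \<noteq> []] @ B)"
    using card_image_le card_length le_trans by blast
  finally show ?thesis .
qed

lemma path_cover_delete_first:
  assumes "path_cover V E (A @ (s # p) # B)"
  shows "path_cover (V - {s}) {e \<in> E. s \<notin> e} (A @ [q\<leftarrow>[p]. q \<noteq> []] @ B)"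
proof -
  have dist: "distinct (concat A @ s # p @ concat B)"
    and setV: "set (concat A @ s # p @ concat B) = V"
    and paths: "\<forall>q \<in> set A \<union> set B. dir_path E q" and dp: "dir_path E (s # p)"
    using assms unfolding path_cover_def by auto
  have "dir_path {e \<in> E. s \<notin> e} q" if "q \<in> set (A @ [q\<leftarrow>[p]. q \<noteq> []] @ B)" for q
  proof (cases "q \<in> set A \<union> set B")
    case True
    then show ?thesis using paths dist by (intro dir_path_avoiding) auto
  next
    case False
    then have "q = p" "p \<noteq> []" using that by (auto split: if_splits)
    then show ?thesis using dist dir_path_ConsD[OF dp] by (intro dir_path_avoiding) auto
  qed
  then show ?thesis unfolding path_cover_def using dist setV by auto
qed

lemma D_arcs_mono:
  assumes "E' \<subseteq> E" and "\<And>q. q \<in> set Qs \<Longrightarrow> \<exists>r \<in> set Ps. path_arcs q \<subseteq> path_arcs r"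
  shows "D_arcs E' Qs \<subseteq> D_arcs E Ps"
proof (rule subrelI)
  fix x y assume "(x, y) \<in> D_arcs E' Qs"
  then obtain q z where q: "q \<in> set Qs" "x \<noteq> y"
    and arc: "(x, y) \<in> path_arcs q \<or> (x, z) \<in> path_arcs q \<and> adj E' y z"
    unfolding D_arcs_def by blast
  obtain r where "r \<in> set Ps" "path_arcs q \<subseteq> path_arcs r" using assms(2)[OF q(1)] by blast
  moreover have "adj E' y z \<Longrightarrow> adj E y z" using assms(1) unfolding adj_def by blast
  ultimately show "(x, y) \<in> D_arcs E Ps"
    using arc q(2) by (meson D_arcs_path_arcI D_arcs_adjacentI subsetD)
qed

lemma D_arcs_delete_first_subset:
  "D_arcs {e \<in> E. s \<notin> e} (A @ [q\<leftarrow>[p]. q \<noteq> []] @ B) \<subseteq> D_arcs E (A @ (s # p) # B)"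
proof (rule D_arcs_mono)
  fix q assume "q \<in> set (A @ [q\<leftarrow>[p]. q \<noteq> []] @ B)"
  then show "\<exists>r \<in> set (A @ (s # p) # B). path_arcs q \<subseteq> path_arcs r"
    using path_arcs_Cons_subset[of p s] by (auto split: if_splits)
qed auto

text \<open>Doubled, to avoid halving and truncated subtraction.\<close>
lemma card_edges_upper_bound:
  assumes "finite V" "simple_graph V E" "path_cover V E Ps" "acyclic (D_arcs E Ps)"
  shows "2 * card E + length Ps * (length Ps + 1) \<le> 2 * length Ps * card V"
  using assms
proof (induction "card V" arbitrary: V E Ps rule: less_induct)
  case less
  show ?case
  proof (cases "V = {}")
    case True
    then have "E = {}" using less.prems(2) unfolding simple_graph_def by fastforce
    moreover have "Ps = []" using path_cover_length_le_card[OF less.prems(3)] True by simp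
    ultimately show ?thesis by simp
  next
    case False
    obtain s where s: "s \<in> V" and src: "\<And>y. (y, s) \<notin> D_arcs E Ps"
      using finite_acyclic_has_source[OF less.prems(1) False D_arcs_subset_Times[OF less.prems(2,3)]
          less.prems(4)] by blast
    obtain A p B where Ps: "Ps = A @ (s # p) # B"
      using D_source_starts_path[OF less.prems(3) s src] .
    define E' where "E' = {e \<in> E. s \<notin> e}"
    define Ps' where "Ps' = A @ [q\<leftarrow>[p]. q \<noteq> []] @ B"
    have "2 * card E' + length Ps' * (length Ps' + 1) \<le> 2 * length Ps' * card (V - {s})"
    proof (rule less.hyps)
      show "card (V - {s}) < card V" using less.prems(1) s by (rule card_Diff1_less)
      show "simple_graph (V - {s}) E'" using less.prems(2) unfolding simple_graph_def E'_def by auto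
      show "path_cover (V - {s}) E' Ps'"
        unfolding E'_def Ps'_def using less.prems(3) unfolding Ps by (rule path_cover_delete_first)
      show "acyclic (D_arcs E' Ps')"
        using less.prems(4) D_arcs_delete_first_subset unfolding E'_def Ps'_def Ps by (rule acyclic_subset)
    qed (use less.prems(1) in simp)
    moreover have "card {e \<in> E. s \<in> e} \<le> length Ps'"
      unfolding Ps'_def using less.prems(2,3) src unfolding Ps by (rule degree_of_D_source_le)
    moreover have "card E = card E' + card {e \<in> E. s \<in> e}"
    proof -
      have "finite E" using less.prems(1,2) by (simp add: simple_graph_finite_edges)
      moreover have "E = E' \<union> {e \<in> E. s \<in> e}" "E' \<inter> {e \<in> E. s \<in> e} = {}"
        unfolding E'_def by auto
      ultimately show ?thesis by (metis card_Un_disjoint finite_Un)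
    qed
    moreover have "card V = Suc (card (V - {s}))" using card_Suc_Diff1[OF less.prems(1) s] by simp
    moreover have "length Ps \<le> card V" using less.prems(3) by (rule path_cover_length_le_card)
    moreover have "length Ps = Suc (length A + length B)"
      "length Ps' = length A + length B + (if p = [] then 0 else 1)"
      unfolding Ps Ps'_def by auto
    ultimately show ?thesis
      by (cases "p = []") (auto simp: algebra_simps)
  qed
qed

lemma card_edges_le:
  assumes "finite V" "simple_graph V E" "path_cover V E Ps" "acyclic (D_arcs E Ps)"
  shows "card E \<le> length Ps * card V - (length Ps + 1 choose 2)"
proof -
  have "2 * (length Ps + 1 choose 2) = length Ps * (length Ps + 1)" by (simp add: choose_two)
  then show ?thesis using card_edges_upper_bound[OF assms] by simp
qed

lemma acyclicI_decreasing:
  fixes r :: "('a :: order \<times> 'a) set"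
  assumes "\<And>x y. (x, y) \<in> r \<Longrightarrow> y < x"
  shows "acyclic r"
proof -
  have "(x, y) \<in> r\<^sup>+ \<Longrightarrow> y < x" for x y
    by (induction rule: trancl_induct) (auto dest: assms)
  then show ?thesis unfolding acyclic_def by blast
qed

definition extremal_graph :: "nat \<Rightarrow> nat \<Rightarrow> nat set set" where
  "extremal_graph k n = {{i, j} | i j. i < j \<and> j < n \<and> (Suc i < k \<or> j = Suc i)}"

definition extremal_cover :: "nat \<Rightarrow> nat \<Rightarrow> nat list list" where
  "extremal_cover k n = map (\<lambda>i. [i]) [0..<k - 1] @ [rev [k - 1..<n]]"

lemma extremal_graph_Suc:
  "extremal_graph k (Suc n) =
    extremal_graph k n \<union> (\<lambda>i. {i, n}) ` {i. i < n \<and> (Suc i < k \<or> n = Suc i)}"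
  unfolding extremal_graph_def by (auto simp: less_Suc_eq)

lemma simple_graph_extremal_graph: "simple_graph {0..<n} (extremal_graph k n)"
  unfolding simple_graph_def extremal_graph_def by auto

lemma card_extremal_graph_Suc:
  assumes "1 \<le> k"
  shows "card (extremal_graph k (Suc n)) = card (extremal_graph k n) + min n k"
proof -
  let ?S = "{i. i < n \<and> (Suc i < k \<or> n = Suc i)}"
  have "finite (extremal_graph k n)"
    using simple_graph_extremal_graph by (rule simple_graph_finite_edges) simp
  moreover have "extremal_graph k n \<inter> (\<lambda>i. {i, n}) ` ?S = {}"
    using simple_graph_extremal_graph[of n k] unfolding simple_graph_def by fastforce
  ultimately have "card (extremal_graph k (Suc n)) =
      card (extremal_graph k n) + card ((\<lambda>i. {i, n}) ` ?S)"
    unfolding extremal_graph_Suc by (intro card_Un_disjoint) auto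
  also have "card ((\<lambda>i. {i, n}) ` ?S) = card ?S"
    by (rule card_image) (auto simp: inj_on_def doubleton_eq_iff)
  also have "card ?S = min n k"
  proof (cases "n \<le> k")
    case True
    then have "?S = {..<n}" by auto
    then show ?thesis using True by simp
  next
    case False
    then have "?S = {..<k - 1} \<union> {n - 1}" using assms by auto
    then show ?thesis using False assms by simp
  qed
  finally show ?thesis .
qed

lemma card_extremal_graph:
  assumes "1 \<le> k"
  shows "2 * card (extremal_graph k n) + min n k * (min n k + 1) = 2 * min n k * n"
proof (induction n)
  case 0
  then show ?case by (simp add: extremal_graph_def)
next
  case (Suc n)
  then show ?case
    using card_extremal_graph_Suc[OF assms, of n] by (cases "n < k") (auto simp: algebra_simps)
qed

lemma card_extremal_graph_eq:
  assumes "1 \<le> k" "k \<le> n"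
  shows "card (extremal_graph k n) = k * n - (k + 1 choose 2)"
proof -
  have "2 * (k + 1 choose 2) = k * (k + 1)" by (simp add: choose_two)
  then show ?thesis using card_extremal_graph[OF assms(1), of n] assms(2) by simp
qed

lemma length_extremal_cover: "1 \<le> k \<Longrightarrow> length (extremal_cover k n) = k"
  unfolding extremal_cover_def by simp

lemma path_cover_extremal_cover:
  assumes "1 \<le> k" "k \<le> n"
  shows "path_cover {0..<n} (extremal_graph k n) (extremal_cover k n)"
proof -
  have "dir_path (extremal_graph k n) (rev [k - 1..<n])"
    unfolding dir_path_def
  proof (intro conjI allI impI)
    show "rev [k - 1..<n] \<noteq> []" using assms by simp
    show "distinct (rev [k - 1..<n])" by simp
    fix t assume t: "Suc t < length (rev [k - 1..<n])"
    then have "rev [k - 1..<n] ! t = n - 1 - t" "rev [k - 1..<n] ! Suc t = n - 2 - t"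
      by (auto simp: rev_nth)
    moreover have "{n - 2 - t, n - 1 - t} \<in> extremal_graph k n" unfolding extremal_graph_def using t
      by (intro CollectI exI[of _ "n - 2 - t"] exI[of _ "n - 1 - t"]) auto
    ultimately show "adj (extremal_graph k n) (rev [k - 1..<n] ! t) (rev [k - 1..<n] ! Suc t)"
      unfolding adj_def by (simp add: insert_commute)
  qed
  moreover have "concat (map (\<lambda>i. [i]) xs) = xs" for xs :: "nat list"
    by (induction xs) auto
  ultimately show ?thesis
    unfolding path_cover_def extremal_cover_def using assms by (auto simp: dir_path_def)
qed

lemma D_arcs_extremal_decreasing:
  assumes "1 \<le> k" and xy: "(x, y) \<in> D_arcs (extremal_graph k n) (extremal_cover k n)"
  shows "y < x"
proof -
  have arc: "k \<le> a \<and> b = a - 1"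
    if "(a, b) \<in> path_arcs q" "q \<in> set (extremal_cover k n)" for a b q
  proof -
    have "q = rev [k - 1..<n]" using that unfolding extremal_cover_def path_arcs_def by auto
    then show ?thesis using that(1) unfolding path_arcs_def by (auto simp: rev_nth)
  qed
  from xy obtain q z where q: "q \<in> set (extremal_cover k n)" and "x \<noteq> y"
    and "(x, y) \<in> path_arcs q \<or> (x, z) \<in> path_arcs q \<and> adj (extremal_graph k n) y z"
    unfolding D_arcs_def by blast
  then show ?thesis
  proof (elim disjE conjE)
    assume "(x, y) \<in> path_arcs q"
    then show ?thesis using arc[OF _ q] assms(1) by fastforce
  next
    assume "(x, z) \<in> path_arcs q" "adj (extremal_graph k n) y z"
    then obtain i j where "k \<le> x" "z = x - 1" "{y, z} = {i, j}" "i < j" "Suc i < k \<or> j = Suc i"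
      using arc[OF _ q] unfolding adj_def extremal_graph_def by blast
    then show ?thesis using \<open>x \<noteq> y\<close> assms(1) by (auto simp: doubleton_eq_iff)
  qed
qed

lemma acyclic_D_arcs_extremal:
  "1 \<le> k \<Longrightarrow> acyclic (D_arcs (extremal_graph k n) (extremal_cover k n))"
  by (rule acyclicI_decreasing) (rule D_arcs_extremal_decreasing)

theorem theorem1:
  fixes n k :: nat
  assumes "1 \<le> k" and "k \<le> n"
  shows "Gamma n k = k * n - ((k + 1) choose 2)"
proof -
  let ?S = "{card E | E Ps. simple_graph {0..<n} E \<and> length Ps = k \<and>
      path_cover {0..<n} E Ps \<and> acyclic (D_arcs E Ps)}"
  have "finite ?S"
  proof (rule finite_subset)
    show "?S \<subseteq> card ` Pow (Pow {0..<n})" unfolding simple_graph_def by auto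
  qed simp
  moreover have "c \<le> k * n - ((k + 1) choose 2)" if "c \<in> ?S" for c
    using that card_edges_le[of "{0..<n}"] by auto
  moreover have "k * n - ((k + 1) choose 2) \<in> ?S"
    using card_extremal_graph_eq[OF assms, symmetric] simple_graph_extremal_graph
      length_extremal_cover[OF assms(1)] path_cover_extremal_cover[OF assms]
      acyclic_D_arcs_extremal[OF assms(1)]
    by (intro CollectI exI[of _ "extremal_graph k n"] exI[of _ "extremal_cover k n"]) simp
  ultimately show ?thesis unfolding Gamma_def by (rule Max_eqI)
qed

end
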